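(* Let $a>0$, $p>1$, and let $\phi\in C^1((0,a])\cap C^0([0,a])$ satisfy $\phi(0)=0$, $\phi(t)>0$ for $t\in(0,a]$, and $c_1t^{p-1+\delta}\le\phi(t)\le c_2t^{p-1+\delta}$ for all $t\in(0,a]$, for some constants $c_1,c_2,\delta>0$. Suppose moreover that $\phi$ is twice differentiable in $(0,a)$ and $(\log\phi)''(t)=(\phi'/\phi)'(t)<0$ for all $t\in(0,a)$. Let $\eta_a(t)=\phi(t)^{-\frac1{p-1}}\big/\int_t^a\phi(\sigma)^{-\frac1{p-1}}\,d\sigma$ for $t\in(0,a)$. Then there exists a unique $T\in(0,a)$ such that $\eta_a'(t)<0$ for $t\in(0,T)$ and $\eta_a'(t)>0$ for $t\in(T,a)$. *)

theory Defs
  imports "HOL-Analysis.Analysis"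
begin

definition eta_a :: "(real \<Rightarrow> real) \<Rightarrow> real \<Rightarrow> real \<Rightarrow> real \<Rightarrow> real" where
  "eta_a \<phi> p a t =
     \<phi> t powr (-1/(p-1)) / integral {t..a} (\<lambda>\<sigma>. \<phi> \<sigma> powr (-1/(p-1)))"

end

theory Submission
  imports Defs
begin

text \<open>
  Write \<open>\<psi> = \<phi> powr (-1/(p-1))\<close>, \<open>\<kappa> = \<psi>'/\<psi>\<close> and \<open>I t = \<integral>\<^sub>t\<^sup>a \<psi>\<close>. Then
  \<open>\<eta>' = \<psi> g / I\<^sup>2\<close> with \<open>g = \<psi> + \<kappa> I\<close>, and \<open>g' = \<kappa>' I > 0\<close> because log-concavity
  of \<open>\<phi>\<close> makes \<open>\<psi>\<close> strictly log-convex; so \<open>\<eta>'\<close> changes sign exactly once, where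
  the increasing function \<open>g\<close> does, provided \<open>g\<close> takes both signs. Near \<open>a\<close>, \<open>I\<close> tends
  to 0 while \<open>\<psi>\<close> stays bounded below, so \<open>g > 0\<close>. Near 0, \<open>(I/\<psi>)' = -g/\<psi>\<close>: if \<open>g\<close>
  were nonnegative throughout, the positive function \<open>I/\<psi>\<close> would be nonincreasing,
  but the two power bounds on \<open>\<psi>\<close> force \<open>I t / \<psi> t = O(t)\<close>.
\<close>

lemma strict_mono_on_if_has_real_derivative_pos:
  fixes f f' :: "real \<Rightarrow> real"
  assumes "\<And>t. t \<in> {l<..<u} \<Longrightarrow> (f has_real_derivative f' t) (at t)"
    and "\<And>t. t \<in> {l<..<u} \<Longrightarrow> 0 < f' t"
  shows "strict_mono_on {l<..<u} f"
proof (rule strict_mono_onI)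
  fix x y assume x: "x \<in> {l<..<u}" and y: "y \<in> {l<..<u}" and "x < y"
  show "f x < f y"
  proof (rule DERIV_pos_imp_increasing[OF \<open>x < y\<close>])
    fix z assume "x \<le> z" "z \<le> y"
    then have "z \<in> {l<..<u}"
      using x y by auto
    then show "\<exists>d. (f has_real_derivative d) (at z) \<and> 0 < d"
      using assms by blast
  qed
qed

lemma unique_sign_change_if_strict_mono:
  fixes f g :: "real \<Rightarrow> real"
  assumes mono: "strict_mono_on {l<..<u} g" and cont: "continuous_on {l<..<u} g"
    and x: "x \<in> {l<..<u}" "g x < 0" and y: "y \<in> {l<..<u}" "0 < g y"
    and sgn: "\<And>t. t \<in> {l<..<u} \<Longrightarrow> sgn (f t) = sgn (g t)"
  shows "\<exists>!T. T \<in> {l<..<u} \<and> (\<forall>t\<in>{l<..<T}. f t < 0) \<and> (\<forall>t\<in>{T<..<u}. 0 < f t)"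
proof -
  have "x < y"
  proof (rule ccontr)
    assume "\<not> x < y"
    then have "g y \<le> g x"
      using strict_mono_on_leD[OF mono y(1) x(1)] by simp
    then show False
      using x y by simp
  qed
  moreover have "continuous_on {x..y} g"
    using x y by (intro continuous_on_subset[OF cont]) auto
  ultimately obtain T where T: "x \<le> T" "T \<le> y" "g T = 0"
    using IVT'[of g x 0 y] x y by auto
  have T_in: "T \<in> {l<..<u}"
    using T x y by auto
  have below: "f t < 0" if t: "t \<in> {l<..<T}" for t
  proof -
    have "t \<in> {l<..<u}"
      using t T_in by auto
    moreover have "g t < 0"
      using strict_mono_onD[OF mono _ T_in] t T_in T(3) by auto
    ultimately show ?thesis
      using sgn[of t] by (metis sgn_less)
  qed
  have above: "0 < f t" if t: "t \<in> {T<..<u}" for t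
  proof -
    have "t \<in> {l<..<u}"
      using t T_in by auto
    moreover have "0 < g t"
      using strict_mono_onD[OF mono T_in] t T_in T(3) by auto
    ultimately show ?thesis
      using sgn[of t] by (metis sgn_greater)
  qed
  show ?thesis
  proof (rule ex1I[of _ T])
    show "T \<in> {l<..<u} \<and> (\<forall>t\<in>{l<..<T}. f t < 0) \<and> (\<forall>t\<in>{T<..<u}. 0 < f t)"
      using T_in below above by simp
  next
    fix T' assume T': "T' \<in> {l<..<u} \<and> (\<forall>t\<in>{l<..<T'}. f t < 0) \<and> (\<forall>t\<in>{T'<..<u}. 0 < f t)"
    let ?t = "(T + T') / 2"
    show "T' = T"
    proof (rule linorder_cases[of T' T])
      assume "T' < T"
      then have "?t \<in> {l<..<T}" "?t \<in> {T'<..<u}"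
        using T_in T' by auto
      then have "f ?t < 0" "0 < f ?t"
        using below T' by blast+
      then show ?thesis
        by simp
    next
      assume "T < T'"
      then have "?t \<in> {T<..<u}" "?t \<in> {l<..<T'}"
        using T_in T' by auto
      then have "0 < f ?t" "f ?t < 0"
        using above T' by blast+
      then show ?thesis
        by simp
    qed
  qed
qed

lemma tail_integral_has_real_derivative:
  fixes f :: "real \<Rightarrow> real"
  assumes "continuous_on {l<..u} f" and t: "t \<in> {l<..<u}"
  shows "((\<lambda>s. integral {s..u} f) has_real_derivative - f t) (at t)"
proof -
  have "continuous_on {(l + t) / 2..u} f"
    by (rule continuous_on_subset[OF assms(1)]) (use t in auto)
  then have "((\<lambda>s. integral {s..u} f) has_real_derivative - f t) (at t within {(l + t) / 2..u})"
    by (rule integral_has_real_derivative') (use t in auto)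
  moreover have "at t within {(l + t) / 2..u} = at t"
    using t by (intro at_within_interior) auto
  ultimately show ?thesis
    by simp
qed

lemma tail_integral_pos:
  fixes f :: "real \<Rightarrow> real"
  assumes "continuous_on {l<..u} f" and "\<And>s. s \<in> {l<..u} \<Longrightarrow> 0 < f s" and t: "t \<in> {l<..<u}"
  shows "0 < integral {t..u} f"
proof -
  have "integral {t..u} (\<lambda>_. 0) < integral {t..u} f"
    using t assms(2) by (intro integral_less_real continuous_on_subset[OF assms(1)]) auto
  then show ?thesis
    by simp
qed

lemma tail_integral_tendsto_0:
  fixes f :: "real \<Rightarrow> real"
  assumes "continuous_on {l<..u} f" and "l < u"
  shows "((\<lambda>t. integral {t..u} f) \<longlongrightarrow> 0) (at_left u)"
proof -
  let ?m = "(l + u) / 2"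
  have "f integrable_on {?m..u}"
    using assms by (intro integrable_continuous_interval continuous_on_subset[OF assms(1)]) auto
  then have "continuous_on {?m..u} (\<lambda>t. integral {t..u} f)"
    by (rule indefinite_integral_continuous_1')
  moreover have "u \<in> {?m..u}"
    using assms(2) by auto
  ultimately have "((\<lambda>t. integral {t..u} f) \<longlongrightarrow> integral {u..u} f) (at u within {?m..u})"
    unfolding continuous_on_def by blast
  then show ?thesis
    using assms(2) by (simp add: at_within_Icc_at_left)
qed

lemma integral_le_powr_singular_bound:
  fixes f :: "real \<Rightarrow> real"
  assumes "0 < t" "t \<le> b" "0 < \<beta>" "0 \<le> K" "f integrable_on {t..b}"
    and le: "\<And>s. s \<in> {t..b} \<Longrightarrow> f s \<le> K * s powr (-1 - \<beta>)"
  shows "integral {t..b} f \<le> K / \<beta> * t powr (-\<beta>)"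
proof -
  have "((\<lambda>s. - K / \<beta> * s powr (-\<beta>)) has_vector_derivative K * s powr (-1 - \<beta>))
      (at s within {t..b})" if "s \<in> {t..b}" for s
  proof -
    have "((\<lambda>s. - K / \<beta> * s powr (-\<beta>)) has_real_derivative
        - K / \<beta> * (-\<beta> * s powr (-\<beta> - 1))) (at s)"
      using that assms(1) by (intro DERIV_cmult has_real_derivative_powr) auto
    moreover have "s powr (-\<beta> - 1) = s powr (-1 - \<beta>)"
      by (rule arg_cong[where f = "\<lambda>x. s powr x"]) simp
    then have "- K / \<beta> * (-\<beta> * s powr (-\<beta> - 1)) = K * s powr (-1 - \<beta>)"
      using assms(3) by simp
    ultimately show ?thesis
      by (simp add: has_real_derivative_iff_has_vector_derivative has_vector_derivative_at_within)
  qed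
  then have "((\<lambda>s. K * s powr (-1 - \<beta>)) has_integral
      - K / \<beta> * b powr (-\<beta>) - (- K / \<beta> * t powr (-\<beta>))) {t..b}"
    by (rule fundamental_theorem_of_calculus[OF assms(2)])
  then have "integral {t..b} f \<le> - K / \<beta> * b powr (-\<beta>) - (- K / \<beta> * t powr (-\<beta>))"
    by (rule has_integral_le[OF integrable_integral[OF assms(5)] _ le])
  also have "\<dots> \<le> K / \<beta> * t powr (-\<beta>)"
    using assms(3,4) by simp
  finally show ?thesis .
qed

locale singular_log_convex_weight =
  fixes \<psi> \<kappa> :: "real \<Rightarrow> real" and a \<beta> C K :: real
  assumes a_pos: "0 < a" and \<beta>_pos: "0 < \<beta>" and C_pos: "0 < C"
    and continuous: "continuous_on {0<..a} \<psi>"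
    and lower_bound: "\<And>t. t \<in> {0<..a} \<Longrightarrow> C * t powr (-1 - \<beta>) \<le> \<psi> t"
    and upper_bound: "\<And>t. t \<in> {0<..a} \<Longrightarrow> \<psi> t \<le> K * t powr (-1 - \<beta>)"
    and weight_has_deriv: "\<And>t. t \<in> {0<..<a} \<Longrightarrow> (\<psi> has_real_derivative \<kappa> t * \<psi> t) (at t)"
    and logderiv_differentiable: "\<And>t. t \<in> {0<..<a} \<Longrightarrow> \<kappa> differentiable (at t)"
    and deriv_logderiv_pos: "\<And>t. t \<in> {0<..<a} \<Longrightarrow> 0 < deriv \<kappa> t"
begin

lemma weight_pos: "t \<in> {0<..a} \<Longrightarrow> 0 < \<psi> t"
  using lower_bound[of t] C_pos by (smt (verit) greaterThanAtMost_iff mult_pos_pos powr_gt_zero)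

lemma K_pos: "0 < K"
proof -
  have "0 < K * a powr (-1 - \<beta>)"
    using weight_pos[of a] upper_bound[of a] a_pos by fastforce
  then show ?thesis
    by (simp add: zero_less_mult_iff)
qed

definition tail :: "real \<Rightarrow> real"
  where "tail t = integral {t..a} \<psi>"

definition sign_factor :: "real \<Rightarrow> real"
  where "sign_factor t = \<psi> t + \<kappa> t * tail t"

lemma tail_has_deriv: "t \<in> {0<..<a} \<Longrightarrow> (tail has_real_derivative - \<psi> t) (at t)"
  unfolding tail_def[abs_def] by (rule tail_integral_has_real_derivative[OF continuous])

lemma tail_pos: "t \<in> {0<..<a} \<Longrightarrow> 0 < tail t"
  unfolding tail_def by (rule tail_integral_pos[OF continuous weight_pos])

lemma logderiv_has_deriv: "t \<in> {0<..<a} \<Longrightarrow> (\<kappa> has_real_derivative deriv \<kappa> t) (at t)"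
  using logderiv_differentiable by (simp add: DERIV_deriv_iff_real_differentiable)

lemma logderiv_strict_mono: "strict_mono_on {0<..<a} \<kappa>"
  using logderiv_has_deriv deriv_logderiv_pos by (rule strict_mono_on_if_has_real_derivative_pos)

lemma weight_over_tail_has_deriv:
  assumes t: "t \<in> {0<..<a}"
  shows "((\<lambda>s. \<psi> s / tail s) has_real_derivative \<psi> t * sign_factor t / (tail t)\<^sup>2) (at t)"
proof -
  have "((\<lambda>s. \<psi> s / tail s) has_real_derivative
      (\<kappa> t * \<psi> t * tail t - \<psi> t * - \<psi> t) / (tail t * tail t)) (at t)"
    using tail_pos[OF t] by (intro DERIV_divide weight_has_deriv tail_has_deriv t) simp
  then show ?thesis
    by (simp add: sign_factor_def power2_eq_square algebra_simps)
qed

lemma tail_over_weight_has_deriv: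
  assumes t: "t \<in> {0<..<a}"
  shows "((\<lambda>s. tail s / \<psi> s) has_real_derivative - sign_factor t / \<psi> t) (at t)"
proof -
  have "\<psi> t \<noteq> 0"
    using weight_pos[of t] t by auto
  then have "((\<lambda>s. tail s / \<psi> s) has_real_derivative
      (- \<psi> t * \<psi> t - tail t * (\<kappa> t * \<psi> t)) / (\<psi> t * \<psi> t)) (at t)"
    by (intro DERIV_divide weight_has_deriv tail_has_deriv t)
  moreover have "(- \<psi> t * \<psi> t - tail t * (\<kappa> t * \<psi> t)) / (\<psi> t * \<psi> t)
      = (\<psi> t * - sign_factor t) / (\<psi> t * \<psi> t)"
    by (simp add: sign_factor_def algebra_simps)
  ultimately show ?thesis
    using \<open>\<psi> t \<noteq> 0\<close> by simp
qed

lemma sign_factor_has_deriv: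
  "t \<in> {0<..<a} \<Longrightarrow> (sign_factor has_real_derivative deriv \<kappa> t * tail t) (at t)"
  unfolding sign_factor_def[abs_def]
  using DERIV_add[OF weight_has_deriv DERIV_mult[OF logderiv_has_deriv tail_has_deriv]]
  by (simp add: algebra_simps)

lemma sign_factor_strict_mono: "strict_mono_on {0<..<a} sign_factor"
  using sign_factor_has_deriv deriv_logderiv_pos tail_pos
  by (intro strict_mono_on_if_has_real_derivative_pos) auto

lemma sign_factor_continuous: "continuous_on {0<..<a} sign_factor"
  using sign_factor_has_deriv by (intro continuous_at_imp_continuous_on) (blast intro: DERIV_isCont)

lemma tail_over_weight_le_linear:
  assumes t: "t \<in> {0<..<a}"
  shows "tail t / \<psi> t \<le> K / (\<beta> * C) * t"
proof -
  have "tail t \<le> K / \<beta> * t powr (-\<beta>)"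
    unfolding tail_def using t \<beta>_pos K_pos upper_bound
    by (intro integral_le_powr_singular_bound integrable_continuous_interval
        continuous_on_subset[OF continuous]) auto
  moreover have "C * t powr (-1 - \<beta>) \<le> \<psi> t"
    using t by (intro lower_bound) auto
  ultimately have "tail t / \<psi> t \<le> (K / \<beta> * t powr (-\<beta>)) / (C * t powr (-1 - \<beta>))"
    using t tail_pos[OF t] C_pos K_pos \<beta>_pos by (intro frac_le) auto
  also have "\<dots> = K / (\<beta> * C) * (t powr (-\<beta>) / t powr (-1 - \<beta>))"
    by simp
  also have "t powr (-\<beta>) / t powr (-1 - \<beta>) = t"
    using t by (simp flip: powr_diff)
  finally show ?thesis .
qed

lemma tail_over_weight_tendsto_0: "((\<lambda>t. tail t / \<psi> t) \<longlongrightarrow> 0) (at_right 0)"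
proof (rule tendsto_sandwich)
  show "\<forall>\<^sub>F t in at_right 0. 0 \<le> tail t / \<psi> t"
    using eventually_at_right_real[OF a_pos]
    by eventually_elim (use tail_pos weight_pos in \<open>auto intro: less_imp_le\<close>)
  show "\<forall>\<^sub>F t in at_right 0. tail t / \<psi> t \<le> K / (\<beta> * C) * t"
    using eventually_at_right_real[OF a_pos] by eventually_elim (rule tail_over_weight_le_linear)
  show "((\<lambda>t. K / (\<beta> * C) * t) \<longlongrightarrow> 0) (at_right 0)"
    by (intro tendsto_eq_intros) auto
qed simp

lemma sign_factor_neg_somewhere: "\<exists>t\<in>{0<..<a}. sign_factor t < 0"
proof (rule ccontr)
  assume "\<not> ?thesis"
  then have nonneg: "0 \<le> sign_factor t" if "t \<in> {0<..<a}" for t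
    using that by (meson not_less)
  define b where "b = a / 2"
  have b: "b \<in> {0<..<a}"
    using a_pos by (simp add: b_def)
  have tail_over_weight_ge: "tail b / \<psi> b \<le> tail t / \<psi> t" if t: "t \<in> {0<..<b}" for t
  proof (rule DERIV_nonpos_imp_nonincreasing[of t b "\<lambda>s. tail s / \<psi> s"])
    show "t \<le> b"
      using t by simp
  next
    fix s assume "t \<le> s" "s \<le> b"
    then have s: "s \<in> {0<..<a}"
      using t b by auto
    show "\<exists>d. ((\<lambda>s. tail s / \<psi> s) has_real_derivative d) (at s) \<and> d \<le> 0"
      using tail_over_weight_has_deriv[OF s] nonneg[OF s] weight_pos[of s] s by fastforce
  qed
  have "0 < tail b / \<psi> b"
    using tail_pos[OF b] weight_pos[of b] b by simp
  then have "\<forall>\<^sub>F t in at_right 0. tail t / \<psi> t < tail b / \<psi> b \<and> t \<in> {0<..<b}"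
    using order_tendstoD(2)[OF tail_over_weight_tendsto_0] eventually_at_right_real b
    by (simp add: eventually_conj)
  then obtain t where "tail t / \<psi> t < tail b / \<psi> b" "t \<in> {0<..<b}"
    using eventually_happens'[OF trivial_limit_at_right_real] by blast
  with tail_over_weight_ge show False
    by fastforce
qed

lemma sign_factor_pos_somewhere: "\<exists>t\<in>{0<..<a}. 0 < sign_factor t"
proof -
  define b where "b = a / 2"
  have b: "b \<in> {0<..<a}"
    using a_pos by (simp add: b_def)
  define m where "m = C * a powr (-1 - \<beta>)"
  have "0 < m"
    using C_pos a_pos by (simp add: m_def)
  have weight_ge: "m \<le> \<psi> t" if "t \<in> {0<..a}" for t
  proof -
    have "a powr (-1 - \<beta>) \<le> t powr (-1 - \<beta>)"
      using that \<beta>_pos by (intro powr_mono2') auto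
    then show ?thesis
      using lower_bound[OF that] C_pos unfolding m_def by (smt (verit) mult_left_mono)
  qed
  have "((\<lambda>t. \<kappa> b * tail t) \<longlongrightarrow> \<kappa> b * 0) (at_left a)"
    unfolding tail_def by (intro tendsto_mult_left tail_integral_tendsto_0[OF continuous a_pos])
  then have "\<forall>\<^sub>F t in at_left a. - m < \<kappa> b * tail t"
    by (rule order_tendstoD(1)) (use \<open>0 < m\<close> in simp)
  moreover have "\<forall>\<^sub>F t in at_left a. t \<in> {b<..<a}"
    using b by (intro eventually_at_left_real) simp
  ultimately have "\<forall>\<^sub>F t in at_left a. - m < \<kappa> b * tail t \<and> t \<in> {b<..<a}"
    by (rule eventually_conj)
  then obtain t where t: "- m < \<kappa> b * tail t" "t \<in> {b<..<a}"
    using eventually_happens'[OF trivial_limit_at_left_real] by blast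
  then have t_in: "t \<in> {0<..<a}"
    using b by auto
  have "\<kappa> b < \<kappa> t"
    using strict_mono_onD[OF logderiv_strict_mono b t_in] t(2) by simp
  then have "\<kappa> b * tail t \<le> \<kappa> t * tail t"
    using tail_pos[OF t_in] by (simp add: mult_right_mono less_imp_le)
  then have "0 < sign_factor t"
    using weight_ge[of t] t t_in unfolding sign_factor_def by fastforce
  with t_in show ?thesis
    by blast
qed

theorem unique_critical_point:
  "\<exists>!T. T \<in> {0<..<a} \<and>
     (\<forall>t\<in>{0<..<T}. deriv (\<lambda>t. \<psi> t / integral {t..a} \<psi>) t < 0) \<and>
     (\<forall>t\<in>{T<..<a}. 0 < deriv (\<lambda>t. \<psi> t / integral {t..a} \<psi>) t)"
proof -
  obtain x y where x: "x \<in> {0<..<a}" "sign_factor x < 0" and y: "y \<in> {0<..<a}" "0 < sign_factor y"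
    using sign_factor_neg_somewhere sign_factor_pos_somewhere by blast
  have "sgn (deriv (\<lambda>s. \<psi> s / tail s) t) = sgn (sign_factor t)" if t: "t \<in> {0<..<a}" for t
  proof -
    have "deriv (\<lambda>s. \<psi> s / tail s) t = \<psi> t * sign_factor t / (tail t)\<^sup>2"
      by (rule DERIV_imp_deriv[OF weight_over_tail_has_deriv[OF t]])
    then show ?thesis
      using weight_pos[of t] tail_pos[OF t] t by (simp add: sgn_mult)
  qed
  from unique_sign_change_if_strict_mono[OF sign_factor_strict_mono sign_factor_continuous x y this]
  show ?thesis
    by (simp add: tail_def[abs_def])
qed

end

lemma singular_log_convex_weight_powr:
  fixes \<phi> \<phi>' \<phi>'' :: "real \<Rightarrow> real" and a r \<gamma> \<beta> c1 c2 :: real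
  assumes "0 < a" "r < 0" "0 < \<beta>" "0 < c1" "0 < c2" and exponent: "\<gamma> * r = -1 - \<beta>"
    and continuous: "continuous_on {0<..a} \<phi>"
    and lower: "\<And>t. t \<in> {0<..a} \<Longrightarrow> c1 * t powr \<gamma> \<le> \<phi> t"
    and upper: "\<And>t. t \<in> {0<..a} \<Longrightarrow> \<phi> t \<le> c2 * t powr \<gamma>"
    and has_deriv: "\<And>t. t \<in> {0<..<a} \<Longrightarrow> (\<phi> has_real_derivative \<phi>' t) (at t)"
    and has_deriv2: "\<And>t. t \<in> {0<..<a} \<Longrightarrow> (\<phi>' has_real_derivative \<phi>'' t) (at t)"
    and log_concave: "\<And>t. t \<in> {0<..<a} \<Longrightarrow> deriv (\<lambda>s. \<phi>' s / \<phi> s) t < 0"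
  shows "singular_log_convex_weight (\<lambda>t. \<phi> t powr r) (\<lambda>t. r * (\<phi>' t / \<phi> t)) a \<beta>
    (c2 powr r) (c1 powr r)"
proof -
  have pos: "0 < \<phi> t" if "t \<in> {0<..a}" for t
    using lower[OF that] \<open>0 < c1\<close> that by (smt (verit) greaterThanAtMost_iff mult_pos_pos powr_gt_zero)
  have bound_powr: "(c * t powr \<gamma>) powr r = c powr r * t powr (-1 - \<beta>)" if "0 < c" "0 < t" for c t
    using that by (simp add: powr_mult powr_powr exponent)
  have logderiv_has_deriv: "((\<lambda>s. \<phi>' s / \<phi> s) has_real_derivative
      (\<phi>'' t * \<phi> t - \<phi>' t * \<phi>' t) / (\<phi> t * \<phi> t)) (at t)" if t: "t \<in> {0<..<a}" for t
    using pos[of t] t by (intro DERIV_divide has_deriv has_deriv2) auto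
  show ?thesis
  proof unfold_locales
    show "continuous_on {0<..a} (\<lambda>t. \<phi> t powr r)"
      using pos by (intro continuous_on_powr[OF continuous continuous_on_const]) force
  next
    fix t assume t: "t \<in> {0<..a}"
    show "c2 powr r * t powr (-1 - \<beta>) \<le> \<phi> t powr r"
      using powr_mono2'[of r "\<phi> t" "c2 * t powr \<gamma>"] upper[OF t] pos[OF t] bound_powr[of c2 t]
        t assms(2,5) by simp
    show "\<phi> t powr r \<le> c1 powr r * t powr (-1 - \<beta>)"
      using powr_mono2'[of r "c1 * t powr \<gamma>" "\<phi> t"] lower[OF t] bound_powr[of c1 t]
        t assms(2,4) by simp
  next
    fix t assume t: "t \<in> {0<..<a}"
    then have "0 < \<phi> t"
      by (intro pos) auto
    have "((\<lambda>t. \<phi> t powr r) has_real_derivative r * \<phi> t powr (r - of_nat 1) * \<phi>' t) (at t)"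
      by (rule DERIV_fun_powr[OF has_deriv[OF t] \<open>0 < \<phi> t\<close>])
    moreover have "\<phi> t powr (r - of_nat 1) = \<phi> t powr r / \<phi> t"
      using \<open>0 < \<phi> t\<close> by (simp add: powr_diff)
    ultimately show "((\<lambda>t. \<phi> t powr r) has_real_derivative r * (\<phi>' t / \<phi> t) * \<phi> t powr r) (at t)"
      by (simp add: field_simps)
    define d where "d = (\<phi>'' t * \<phi> t - \<phi>' t * \<phi>' t) / (\<phi> t * \<phi> t)"
    have scaled: "((\<lambda>s. r * (\<phi>' s / \<phi> s)) has_real_derivative r * d) (at t)"
      unfolding d_def by (rule DERIV_cmult[OF logderiv_has_deriv[OF t]])
    then show "(\<lambda>s. r * (\<phi>' s / \<phi> s)) differentiable (at t)"
      by (auto simp: real_differentiable_def)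
    have "d < 0"
      using log_concave[OF t] DERIV_imp_deriv[OF logderiv_has_deriv[OF t]] by (simp add: d_def)
    then show "0 < deriv (\<lambda>s. r * (\<phi>' s / \<phi> s)) t"
      using DERIV_imp_deriv[OF scaled] \<open>r < 0\<close> by (simp add: mult_neg_neg)
  qed (use assms in auto)
qed

theorem lemma2p4:
  fixes \<phi> \<phi>' \<phi>'' :: "real \<Rightarrow> real" and a p c1 c2 \<delta> :: real
  assumes a_pos: "a > 0" and p_gt: "p > 1"
    and C1: "\<forall>t\<in>{0<..a}. (\<phi> has_real_derivative \<phi>' t) (at t within {0<..a})"
    and C1_cont: "continuous_on {0<..a} \<phi>'"
    and C0: "continuous_on {0..a} \<phi>"
    and phi0: "\<phi> 0 = 0"
    and phi_pos: "\<forall>t\<in>{0<..a}. \<phi> t > 0"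
    and consts_pos: "c1 > 0" "c2 > 0" "\<delta> > 0"
    and lower: "\<forall>t\<in>{0<..a}. c1 * t powr (p - 1 + \<delta>) \<le> \<phi> t"
    and upper: "\<forall>t\<in>{0<..a}. \<phi> t \<le> c2 * t powr (p - 1 + \<delta>)"
    and twice: "\<forall>t\<in>{0<..<a}. (\<phi>' has_real_derivative \<phi>'' t) (at t)"
    and logconc: "\<forall>t\<in>{0<..<a}. deriv (\<lambda>s. \<phi>' s / \<phi> s) t < 0"
  shows "\<exists>!T. T \<in> {0<..<a} \<and>
           (\<forall>t\<in>{0<..<T}. deriv (eta_a \<phi> p a) t < 0) \<and>
           (\<forall>t\<in>{T<..<a}. deriv (eta_a \<phi> p a) t > 0)"
proof -
  have has_deriv: "(\<phi> has_real_derivative \<phi>' t) (at t)" if t: "t \<in> {0<..<a}" for t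
  proof -
    have "(\<phi> has_real_derivative \<phi>' t) (at t within {0<..a})"
      using C1 t by auto
    then have "(\<phi> has_real_derivative \<phi>' t) (at t within {0<..<a})"
      by (rule has_field_derivative_subset) auto
    moreover have "at t within {0<..<a} = at t"
      using t by (intro at_within_open) auto
    ultimately show ?thesis
      by simp
  qed
  have exponent: "(p - 1 + \<delta>) * (-1 / (p - 1)) = -1 - \<delta> / (p - 1)"
    using p_gt by (simp add: field_simps)
  have continuous: "continuous_on {0<..a} \<phi>"
    by (rule continuous_on_subset[OF C0]) auto
  have "-1 / (p - 1) < 0" "0 < \<delta> / (p - 1)"
    using p_gt consts_pos by simp_all
  from singular_log_convex_weight_powr[OF a_pos this consts_pos(1,2) exponent continuous
      lower[rule_format] upper[rule_format] has_deriv twice[rule_format] logconc[rule_format]]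
  interpret singular_log_convex_weight "\<lambda>t. \<phi> t powr (-1 / (p - 1))"
      "\<lambda>t. -1 / (p - 1) * (\<phi>' t / \<phi> t)" a "\<delta> / (p - 1)"
      "c2 powr (-1 / (p - 1))" "c1 powr (-1 / (p - 1))" .
  show ?thesis
    unfolding eta_a_def[abs_def] by (rule unique_critical_point)
qed

end
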